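(* Let $\alpha\in[0,1)$ and let $n\geq f(\alpha)$ be an integer. Then $\theta(n)<\eta(n)$.
   Context: Define $f(\alpha)=14$ if $\alpha\in[0,\frac12]$, $f(\alpha)=17$ if $\alpha\in(\frac12,\frac23]$, $f(\alpha)=20$ if $\alpha\in(\frac23,\frac34]$, and $f(\alpha)=\frac{5}{1-\alpha}+1$ if $\alpha\in(\frac34,1)$. $\theta(n)$ is the largest root of $x^{3}-((\alpha+1)n+\alpha-5)x^{2}+(\alpha n^{2}+(\alpha^{2}-3\alpha-1)n-2\alpha+1)x-\alpha^{2}n^{2}+(7\alpha^{2}-5\alpha+3)n-18\alpha^{2}+29\alpha-15=0$, and $\eta(n)$ is the largest root of $x^{3}-((\alpha+1)n+\alpha-4)x^{2}+(\alpha n^{2}+(\alpha^{2}-2\alpha-1)n-2\alpha+1)x-\alpha^{2}n^{2}+(5\alpha^{2}-3\alpha+2)n-10\alpha^{2}+15\alpha-8=0$. *)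

theory Defs
  imports Complex_Main
begin

definition f_thr :: "real \<Rightarrow> real" where
  "f_thr \<alpha> = (if \<alpha> \<le> 1/2 then 14
              else if \<alpha> \<le> 2/3 then 17
              else if \<alpha> \<le> 3/4 then 20
              else 5 / (1 - \<alpha>) + 1)"

definition theta_poly :: "real \<Rightarrow> real \<Rightarrow> real \<Rightarrow> real" where
  "theta_poly \<alpha> n x =
     x^3 - ((\<alpha>+1)*n + \<alpha> - 5) * x^2
     + (\<alpha>*n^2 + (\<alpha>^2 - 3*\<alpha> - 1)*n - 2*\<alpha> + 1) * x
     - \<alpha>^2*n^2 + (7*\<alpha>^2 - 5*\<alpha> + 3)*n - 18*\<alpha>^2 + 29*\<alpha> - 15"

definition eta_poly :: "real \<Rightarrow> real \<Rightarrow> real \<Rightarrow> real" where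
  "eta_poly \<alpha> n x =
     x^3 - ((\<alpha>+1)*n + \<alpha> - 4) * x^2
     + (\<alpha>*n^2 + (\<alpha>^2 - 2*\<alpha> - 1)*n - 2*\<alpha> + 1) * x
     - \<alpha>^2*n^2 + (5*\<alpha>^2 - 3*\<alpha> + 2)*n - 10*\<alpha>^2 + 15*\<alpha> - 8"

text \<open>Largest real root (a real monic cubic always has a real root, and finitely many).\<close>
definition theta :: "real \<Rightarrow> nat \<Rightarrow> real" where
  "theta \<alpha> n = Max {x. theta_poly \<alpha> (real n) x = 0}"

definition eta :: "real \<Rightarrow> nat \<Rightarrow> real" where
  "eta \<alpha> n = Max {x. eta_poly \<alpha> (real n) x = 0}"

end

theory Submission
  imports Defs "HOL-Computational_Algebra.Polynomial"
begin

text \<open>Both cubics are monic, so each has a root beyond any point where it is negative. The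
  \<theta>-cubic equals \<open>-3(1 - \<alpha>)(1 + \<alpha>(n - 6))\<close> at \<open>n - 4\<close>, hence \<open>\<theta>(n) > n - 4\<close>. The \<eta>-cubic is
  the \<theta>-cubic plus a concave quadratic that decreases beyond \<open>\<alpha>n/2 \<le> n - 4\<close> and is negative at
  \<open>n - 4\<close> as soon as \<open>(1 - \<alpha>)n \<ge> 7 - 2\<alpha> - 2\<alpha>\<^sup>2\<close>, which is what \<open>n \<ge> f(\<alpha>)\<close> guarantees.
  So the \<eta>-cubic is negative at \<open>\<theta>(n)\<close>, and its largest root lies beyond.\<close>

lemma largest_root_above_negative_value:
  fixes p :: "real poly"
  assumes "lead_coeff p > 0" and "poly p y < 0"
  shows "poly p (Max {x. poly p x = 0}) = 0" and "y < Max {x. poly p x = 0}"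
proof -
  let ?R = "{x. poly p x = 0}"
  obtain b where "\<forall>x\<ge>b. poly p x \<ge> lead_coeff p"
    using poly_pinfty_gt_lc assms(1) by blast
  then have "lead_coeff p \<le> poly p (max b (y + 1))" by simp
  then have "poly p (max b (y + 1)) > 0" using assms(1) by linarith
  moreover have "y < max b (y + 1)" by (simp add: less_max_iff_disj)
  ultimately obtain z where "y < z" and z: "z \<in> ?R"
    using poly_IVT_pos assms(2) by blast
  have "p \<noteq> 0" using assms(1) by auto
  then have fin: "finite ?R" by (rule poly_roots_finite)
  show "poly p (Max ?R) = 0" using Max_in[OF fin] z by auto
  show "y < Max ?R" using Max_ge[OF fin z] \<open>y < z\<close> by linarith
qed

lemma monic_cubic_poly: "\<exists>p. lead_coeff p = 1 \<and> (\<lambda>x::real. x^3 + b*x^2 + c*x + d) = poly p"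
  by (intro exI[of _ "[:d, c, b, 1:]"]) (simp add: fun_eq_iff algebra_simps power2_eq_square power3_eq_cube)

lemma theta_poly_monic: "\<exists>p. lead_coeff p = 1 \<and> theta_poly \<alpha> m = poly p"
proof -
  have "theta_poly \<alpha> m = (\<lambda>x. x^3 + (- ((\<alpha>+1)*m + \<alpha> - 5))*x^2
      + (\<alpha>*m^2 + (\<alpha>^2 - 3*\<alpha> - 1)*m - 2*\<alpha> + 1)*x
      + (- (\<alpha>^2*m^2) + (7*\<alpha>^2 - 5*\<alpha> + 3)*m - 18*\<alpha>^2 + 29*\<alpha> - 15))"
    by (simp add: fun_eq_iff theta_poly_def algebra_simps)
  then show ?thesis using monic_cubic_poly by presburger
qed

lemma eta_poly_monic: "\<exists>p. lead_coeff p = 1 \<and> eta_poly \<alpha> m = poly p"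
proof -
  have "eta_poly \<alpha> m = (\<lambda>x. x^3 + (- ((\<alpha>+1)*m + \<alpha> - 4))*x^2
      + (\<alpha>*m^2 + (\<alpha>^2 - 2*\<alpha> - 1)*m - 2*\<alpha> + 1)*x
      + (- (\<alpha>^2*m^2) + (5*\<alpha>^2 - 3*\<alpha> + 2)*m - 10*\<alpha>^2 + 15*\<alpha> - 8))"
    by (simp add: fun_eq_iff eta_poly_def algebra_simps)
  then show ?thesis using monic_cubic_poly by presburger
qed

lemma f_thr_bounds:
  fixes \<alpha> m :: real
  assumes "0 \<le> \<alpha>" and "\<alpha> < 1" and "m \<ge> f_thr \<alpha>"
  shows "7 - 2*\<alpha> - 2*\<alpha>^2 \<le> (1 - \<alpha>)*m" and "8 \<le> m"
proof -
  have scale: "(1 - \<alpha>)*c \<le> (1 - \<alpha>)*m" if "c \<le> m" for c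
    using that assms(2) by (intro mult_left_mono) auto
  have square: "l*\<alpha> \<le> \<alpha>^2" if "l \<le> \<alpha>" for l
    using that assms(1) by (simp add: power2_eq_square mult_right_mono)
  consider "\<alpha> \<le> 1/2" "m \<ge> 14" | "1/2 < \<alpha>" "\<alpha> \<le> 2/3" "m \<ge> 17"
    | "2/3 < \<alpha>" "\<alpha> \<le> 3/4" "m \<ge> 20" | "3/4 < \<alpha>" "m \<ge> 5/(1 - \<alpha>) + 1"
    using assms(3) by (auto simp: f_thr_def split: if_splits)
  then have "7 - 2*\<alpha> - 2*\<alpha>^2 \<le> (1 - \<alpha>)*m \<and> 8 \<le> m"
  proof cases
    case 1
    then show ?thesis using scale[OF 1(2)] square[OF assms(1)]
      unfolding left_diff_distrib by linarith
  next
    case 2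
    then show ?thesis using scale[OF 2(3)] square[OF assms(1)]
      unfolding left_diff_distrib by linarith
  next
    case 3
    then show ?thesis using scale[OF 3(3)] square[OF less_imp_le[OF 3(1)]]
      unfolding left_diff_distrib by linarith
  next
    case 4
    have "(1 - \<alpha>)*(5/(1 - \<alpha>) + 1) = 6 - \<alpha>" and "20 \<le> 5/(1 - \<alpha>)"
      using 4 assms(2) by (simp_all add: field_simps)
    then show ?thesis using 4 scale[OF 4(2)] square[OF less_imp_le[OF 4(1)]] by linarith
  qed
  then show "7 - 2*\<alpha> - 2*\<alpha>^2 \<le> (1 - \<alpha>)*m" and "8 \<le> m" by auto
qed

lemma theta_poly_at_m_minus_4_neg:
  fixes \<alpha> m :: real
  assumes "0 \<le> \<alpha>" and "\<alpha> < 1" and "8 \<le> m"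
  shows "theta_poly \<alpha> m (m - 4) < 0"
proof -
  have "theta_poly \<alpha> m (m - 4) = -3*(1 - \<alpha>)*(1 + \<alpha>*(m - 6))"
    by (simp add: theta_poly_def algebra_simps power2_eq_square power3_eq_cube)
  also have "\<dots> < 0"
  proof (rule mult_neg_pos)
    have "0 \<le> \<alpha>*(m - 6)" using assms by simp
    then show "0 < 1 + \<alpha>*(m - 6)" by linarith
  qed (use assms in simp)
  finally show ?thesis .
qed

lemma eta_poly_less_theta_poly:
  fixes \<alpha> m x :: real
  assumes "0 \<le> \<alpha>" and "\<alpha> < 1" and "7 - 2*\<alpha> - 2*\<alpha>^2 \<le> (1 - \<alpha>)*m" and "8 \<le> m"
    and "m - 4 \<le> x"
  shows "eta_poly \<alpha> m x < theta_poly \<alpha> m x"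
proof -
  define g :: "real \<Rightarrow> real"
    where "g = (\<lambda>t. -(t^2) + \<alpha>*m*t - (2*\<alpha>^2 - 2*\<alpha> + 1)*m + 8*\<alpha>^2 - 14*\<alpha> + 7)"
  have "eta_poly \<alpha> m x = theta_poly \<alpha> m x + g x"
    by (simp add: eta_poly_def theta_poly_def g_def algebra_simps power2_eq_square)
  moreover have "g x \<le> g (m - 4)"
  proof -
    have "\<alpha>*m \<le> m" using assms(2,4) by simp
    then have "m - 4 - x \<le> 0" and "0 \<le> x + (m - 4) - \<alpha>*m" using assms(4,5) by linarith+
    then have "(m - 4 - x) * (x + (m - 4) - \<alpha>*m) \<le> 0" by (rule mult_nonpos_nonneg)
    moreover have "g x - g (m - 4) = (m - 4 - x) * (x + (m - 4) - \<alpha>*m)"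
      by (simp add: g_def algebra_simps power2_eq_square)
    ultimately show ?thesis by simp
  qed
  moreover have "g (m - 4) < 0"
  proof -
    have "g (m - 4) = - m*((1 - \<alpha>)*m - (7 - 2*\<alpha> - 2*\<alpha>^2)) - (9 + 14*\<alpha> - 8*\<alpha>^2)"
      by (simp add: g_def algebra_simps power2_eq_square)
    moreover have "0 \<le> m*((1 - \<alpha>)*m - (7 - 2*\<alpha> - 2*\<alpha>^2))"
      using assms(3,4) by simp
    moreover have "\<alpha>^2 \<le> \<alpha>" using assms(1,2) by (simp add: power2_eq_square mult_left_le)
    ultimately show ?thesis using assms(1) by linarith
  qed
  ultimately show ?thesis by linarith
qed

theorem mainTheorem3:
  fixes \<alpha> :: real and n :: nat
  assumes "0 \<le> \<alpha>" and "\<alpha> < 1" and "real n \<ge> f_thr \<alpha>"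
  shows "theta \<alpha> n < eta \<alpha> n"
proof -
  note bounds = f_thr_bounds[OF assms]
  obtain p where p: "lead_coeff p = 1" "theta_poly \<alpha> n = poly p"
    using theta_poly_monic by blast
  obtain q where q: "lead_coeff q = 1" "eta_poly \<alpha> n = poly q"
    using eta_poly_monic by blast
  have theta_p: "theta \<alpha> n = Max {x. poly p x = 0}" using p by (simp add: theta_def)
  have "poly p (real n - 4) < 0" using theta_poly_at_m_minus_4_neg[OF assms(1,2) bounds(2)] p by simp
  then have root: "theta_poly \<alpha> n (theta \<alpha> n) = 0" and above: "real n - 4 < theta \<alpha> n"
    using largest_root_above_negative_value[of p] p theta_p by auto
  have "eta_poly \<alpha> n (theta \<alpha> n) < theta_poly \<alpha> n (theta \<alpha> n)"
    using eta_poly_less_theta_poly[OF assms(1,2) bounds] above by simp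
  then have "poly q (theta \<alpha> n) < 0" using root q by simp
  then show ?thesis using largest_root_above_negative_value(2)[of q] q by (simp add: eta_def)
qed

end
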